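(* Let $R$ be a quasi-simple $\Delta$-ring, $X=\mathrm{Spec}\,R$ with the induced vector fields, and $U$ a nonempty open set of $X$. Then the $\Delta$-ring $\mathcal O_X(U)$ is quasi-simple.
   Context: $\Delta$ is a fixed set; rings are commutative with unit. A $\Delta$-ring is a ring $R$ with a map $\Delta\to\mathrm{Der}(R)$; $C(R)$ is its ring of constants. The derivations extend to localizations and to sections of the structure sheaf of $\mathrm{Spec}\,R$, making $\mathcal O_X(U)$ a $\Delta$-ring. A $\Delta$-ring $R$ is quasi-simple if it is a domain and $C(R)\to C(\mathrm{Frac}\,R)$ is an isomorphism. *)

theory Defs
  imports "HOL-Computational_Algebra.Fraction_Field" "HOL-Library.Function_Algebras"
begin

definition is_derivation :: "('a::comm_ring_1 \<Rightarrow> 'a) \<Rightarrow> bool" where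
  "is_derivation d \<longleftrightarrow> (\<forall>x y. d (x + y) = d x + d y) \<and> (\<forall>x y. d (x * y) = x * d y + d x * y)"

definition frac_der :: "('a::idom \<Rightarrow> 'a) \<Rightarrow> 'a fract \<Rightarrow> 'a fract" where
  "frac_der d x = (SOME y. \<forall>a b. b \<noteq> 0 \<and> x = Fract a b \<longrightarrow> y = Fract (d a * b - a * d b) (b * b))"

(* Quasi-simple Delta-ring R (R a domain, given by the type class idom):
   the natural map C(R) -> C(Frac R) is an isomorphism (injectivity is automatic,
   so we state surjectivity). *)
definition quasi_simple :: "('d \<Rightarrow> 'a::idom \<Rightarrow> 'a) \<Rightarrow> bool" where
  "quasi_simple D \<longleftrightarrow>
     (\<forall>x::'a fract. (\<forall>\<delta>. frac_der (D \<delta>) x = 0) \<longrightarrow> (\<exists>c. (\<forall>\<delta>. D \<delta> c = 0) \<and> x = Fract c 1))"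

definition prime_ideal :: "'a::comm_ring_1 set \<Rightarrow> bool" where
  "prime_ideal P \<longleftrightarrow> 0 \<in> P \<and> (\<forall>x\<in>P. \<forall>y\<in>P. x + y \<in> P) \<and> (\<forall>r. \<forall>x\<in>P. r * x \<in> P)
     \<and> 1 \<notin> P \<and> (\<forall>x y. x * y \<in> P \<longrightarrow> x \<in> P \<or> y \<in> P)"

definition Spec :: "'a::comm_ring_1 set set" where
  "Spec = {P. prime_ideal P}"

definition zariski_open :: "'a::comm_ring_1 set set \<Rightarrow> bool" where
  "zariski_open U \<longleftrightarrow> (\<exists>I. U = {P \<in> Spec. \<not> I \<subseteq> P})"

(* Sections of the structure sheaf over an open U (Hartshorne's definition), for R a domain:
   each stalk R_q is identified with its image {a/f | f \<notin> q} in Frac R, so a section is a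
   function s : U -> Frac R that is locally of the form q \<mapsto> a/f with f \<notin> q.
   Outside U the function is fixed to 0 (extensionality). *)
definition sections :: "'a::idom set set \<Rightarrow> ('a set \<Rightarrow> 'a fract) set" where
  "sections U = {s. (\<forall>p. p \<notin> U \<longrightarrow> s p = 0) \<and>
     (\<forall>p\<in>U. \<exists>V. zariski_open V \<and> p \<in> V \<and> V \<subseteq> U \<and>
        (\<exists>a f. \<forall>q\<in>V. f \<notin> q \<and> s q = Fract a f))}"

(* unit of the ring O_X(U) (ring operations are pointwise) *)
definition sec_one :: "'a::idom set set \<Rightarrow> ('a set \<Rightarrow> 'a fract)" where
  "sec_one U = (\<lambda>p. if p \<in> U then 1 else 0)"

definition sec_der :: "('d \<Rightarrow> 'a::idom \<Rightarrow> 'a) \<Rightarrow> 'd \<Rightarrow> ('a set \<Rightarrow> 'a fract) \<Rightarrow> ('a set \<Rightarrow> 'a fract)" where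
  "sec_der D \<delta> s = (\<lambda>p. frac_der (D \<delta>) (s p))"

(* Quasi-simplicity of a Delta-ring given as a subset S (closed under the ambient + and times)
   with unit e: S is a domain, and every constant a/b of Frac S (a, b \<in> S, b \<noteq> 0, derivative
   (Da*b - a*Db)/b^2 = 0) comes from a constant c of S, i.e. a/b = c/1. *)
definition quasi_simple_sub :: "'b::comm_ring_1 set \<Rightarrow> 'b \<Rightarrow> ('d \<Rightarrow> 'b \<Rightarrow> 'b) \<Rightarrow> bool" where
  "quasi_simple_sub S e Ds \<longleftrightarrow>
     e \<in> S \<and> (\<forall>x\<in>S. e * x = x) \<and> e \<noteq> 0 \<and>
     (\<forall>x\<in>S. \<forall>y\<in>S. x * y = 0 \<longrightarrow> x = 0 \<or> y = 0) \<and>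
     (\<forall>a\<in>S. \<forall>b\<in>S. b \<noteq> 0 \<and> (\<forall>\<delta>. Ds \<delta> a * b - a * Ds \<delta> b = 0) \<longrightarrow>
        (\<exists>c\<in>S. (\<forall>\<delta>. Ds \<delta> c = 0) \<and> a = c * b))"

end

theory Submission
  imports Defs
begin

text \<open>Since \<open>R\<close> is a domain, the zero ideal is a generic point of \<open>X\<close> lying in every nonempty
  open set, and every stalk embeds in \<open>K = Frac R\<close>; hence a section over \<open>U\<close> is the constant
  function with its value at the generic point, and \<open>R \<subseteq> O\<^sub>X(U) \<subseteq> K\<close>. A constant \<open>a/b\<close> of the fraction
  field of \<open>O\<^sub>X(U)\<close> is then a constant of \<open>K\<close>, so by quasi-simplicity of \<open>R\<close> it is some \<open>c \<in> C(R)\<close>,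
  which is itself a section.\<close>

lemma derivation_zero: "is_derivation d \<Longrightarrow> d 0 = 0"
  unfolding is_derivation_def by (metis add_0 add_left_cancel add.right_neutral)

lemma derivation_one: "is_derivation d \<Longrightarrow> d 1 = 0"
  unfolding is_derivation_def by (metis add_cancel_right_right mult_1_left mult_1_right)

lemma derivation_mult: "is_derivation d \<Longrightarrow> d (x * y) = x * d y + d x * y"
  unfolding is_derivation_def by blast

lemma derivation_add: "is_derivation d \<Longrightarrow> d (x + y) = d x + d y"
  unfolding is_derivation_def by blast

lemma derivation_divide:
  fixes d :: "'a::field \<Rightarrow> 'a"
  assumes d: "is_derivation d" and y: "y \<noteq> 0"
  shows "d (x / y) * (y * y) = d x * y - x * d y"
proof -
  have "d x = x / y * d y + d (x / y) * y"
    using derivation_mult[OF d, of "x / y" y] y by simp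
  then show ?thesis
    using y by (simp add: field_simps)
qed

text \<open>Well-definedness of the quotient rule: cross-multiplying \<open>a * b' = a' * b\<close> and
  differentiating both sides gives exactly the identity needed between the two candidate values.\<close>

lemma quotient_rule_independent_of_representative:
  fixes d :: "'a::idom \<Rightarrow> 'a"
  assumes d: "is_derivation d" and b: "b \<noteq> 0" and b': "b' \<noteq> 0"
    and eq: "Fract a b = Fract a' b'"
  shows "Fract (d a * b - a * d b) (b * b) = Fract (d a' * b' - a' * d b') (b' * b')"
proof -
  have cross: "a * b' = a' * b"
    using eq b b' by (simp add: eq_fract)
  then have "d (a * b') = d (a' * b)"
    by simp
  then have diff: "d a * b' = a' * d b + d a' * b - a * d b'"
    by (simp add: derivation_mult[OF d] algebra_simps)
  have "(d a * b - a * d b) * (b' * b') = b * b' * (d a * b') - (a * b') * b' * d b"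
    by (simp add: algebra_simps)
  also have "\<dots> = b * b' * (a' * d b + d a' * b - a * d b') - a' * b * b' * d b"
    unfolding diff cross ..
  also have "\<dots> = b * b * d a' * b' - b * (a * b') * d b'"
    by (simp add: algebra_simps)
  also have "\<dots> = (d a' * b' - a' * d b') * (b * b)"
    unfolding cross by (simp add: algebra_simps)
  finally show ?thesis
    using b b' by (subst eq_fract(1)) simp_all
qed

lemma frac_der_Fract:
  fixes d :: "'a::idom \<Rightarrow> 'a"
  assumes d: "is_derivation d" and b: "b \<noteq> 0"
  shows "frac_der d (Fract a b) = Fract (d a * b - a * d b) (b * b)"
  unfolding frac_der_def
proof (rule some_equality)
  show "\<forall>a' b'. b' \<noteq> 0 \<and> Fract a b = Fract a' b' \<longrightarrow>
      Fract (d a * b - a * d b) (b * b) = Fract (d a' * b' - a' * d b') (b' * b')"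
    using quotient_rule_independent_of_representative[OF d b] by blast
qed (use b in blast)

lemma is_derivation_frac_der:
  fixes d :: "'a::idom \<Rightarrow> 'a"
  assumes d: "is_derivation d"
  shows "is_derivation (frac_der d)"
  unfolding is_derivation_def
proof (intro conjI allI)
  fix x y :: "'a fract"
  obtain a b where x: "x = Fract a b" "b \<noteq> 0" by (cases x)
  obtain c e where y: "y = Fract c e" "e \<noteq> 0" by (cases y)
  note der = frac_der_Fract[OF d] derivation_mult[OF d] derivation_add[OF d]
  show "frac_der d (x + y) = frac_der d x + frac_der d y"
    using x y by (simp add: der eq_fract algebra_simps)
  show "frac_der d (x * y) = x * frac_der d y + frac_der d x * y"
    using x y by (simp add: der eq_fract algebra_simps)
qed

lemma frac_der_Fract_constant:
  assumes d: "is_derivation d" and "d c = 0"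
  shows "frac_der d (Fract c 1) = 0"
  using assms by (simp add: frac_der_Fract derivation_one Zero_fract_def)

lemma quasi_simple_fract_constant:
  fixes D :: "'d \<Rightarrow> 'a::idom \<Rightarrow> 'a"
  assumes der: "\<forall>\<delta>. is_derivation (D \<delta>)" and qs: "quasi_simple D" and y: "y \<noteq> 0"
    and const: "\<forall>\<delta>. frac_der (D \<delta>) x * y - x * frac_der (D \<delta>) y = 0"
  shows "\<exists>c. (\<forall>\<delta>. D \<delta> c = 0) \<and> x = Fract c 1 * y"
proof -
  have "frac_der (D \<delta>) (x / y) = 0" for \<delta>
    using derivation_divide[OF is_derivation_frac_der, of "D \<delta>" y x] der const y by simp
  then obtain c where "\<forall>\<delta>. D \<delta> c = 0" "x / y = Fract c 1"
    using qs unfolding quasi_simple_def by blast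
  then show ?thesis
    using y by (metis nonzero_eq_divide_eq)
qed

lemma prime_ideal_zero: "prime_ideal {0::'a::idom}"
  unfolding prime_ideal_def by auto

lemma zero_ideal_in_open:
  assumes "zariski_open (V::'a::idom set set)" "V \<noteq> {}"
  shows "{0} \<in> V"
proof -
  obtain I where I: "V = {P \<in> Spec. \<not> I \<subseteq> P}"
    using assms(1) zariski_open_def by blast
  then obtain P where P: "prime_ideal P" "\<not> I \<subseteq> P"
    using assms(2) by (auto simp: Spec_def)
  then have "\<not> I \<subseteq> {0}"
    by (auto simp: prime_ideal_def)
  then show ?thesis
    using I prime_ideal_zero by (auto simp: Spec_def)
qed

definition const_section :: "'a set set \<Rightarrow> 'b::zero \<Rightarrow> 'a set \<Rightarrow> 'b" where
  "const_section U x = (\<lambda>p. if p \<in> U then x else 0)"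

lemma const_section_mult:
  "const_section U x * const_section U y = const_section U (x * y :: 'b::mult_zero)"
  by (auto simp: const_section_def)

lemma const_section_0 [simp]: "const_section U 0 = 0"
  by (simp add: const_section_def fun_eq_iff)

lemma const_section_eq_0_iff: "p \<in> U \<Longrightarrow> const_section U x = 0 \<longleftrightarrow> x = 0"
  by (auto simp: const_section_def fun_eq_iff)

lemma sec_der_const_section:
  "is_derivation (D \<delta>) \<Longrightarrow> sec_der D \<delta> (const_section U x) = const_section U (frac_der (D \<delta>) x)"
  using derivation_zero[OF is_derivation_frac_der, of "D \<delta>"]
  by (auto simp: sec_der_def const_section_def)

lemma sections_eq_const_section:
  assumes "s \<in> sections U"
  shows "s = const_section U (s {0})"
proof
  fix p
  show "s p = const_section U (s {0}) p"
  proof (cases "p \<in> U")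
    case True
    then obtain V a f where V: "zariski_open V" "p \<in> V"
      and af: "\<forall>q\<in>V. f \<notin> q \<and> s q = Fract a f"
      using assms unfolding sections_def by blast
    have "{0} \<in> V"
      using zero_ideal_in_open V by blast
    then show ?thesis
      using af V(2) True by (simp add: const_section_def)
  qed (use assms in \<open>simp add: sections_def const_section_def\<close>)
qed

lemma const_section_Fract_in_sections:
  assumes "zariski_open U"
  shows "const_section U (Fract c 1) \<in> sections U"
proof -
  have "\<forall>q\<in>U. 1 \<notin> q \<and> const_section U (Fract c 1) q = Fract c 1"
    using assms by (auto simp: zariski_open_def Spec_def prime_ideal_def const_section_def)
  then have "\<forall>p\<in>U. \<exists>V. zariski_open V \<and> p \<in> V \<and> V \<subseteq> U \<and>
      (\<exists>a f. \<forall>q\<in>V. f \<notin> q \<and> const_section U (Fract c 1) q = Fract a f)"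
    using assms by blast
  then show ?thesis
    unfolding sections_def by (simp add: const_section_def)
qed

lemma sections_no_zero_divisors:
  assumes "{0} \<in> U" "x \<in> sections U" "y \<in> sections U" "x * y = 0"
  shows "x = 0 \<or> y = 0"
  using assms const_section_mult[of U "x {0}" "y {0}"] sections_eq_const_section
    const_section_eq_0_iff[OF assms(1)]
  by (metis mult_eq_0_iff)

lemma sections_quotient_constant:
  fixes D :: "'d \<Rightarrow> 'a::idom \<Rightarrow> 'a"
  assumes der: "\<forall>\<delta>. is_derivation (D \<delta>)" and qs: "quasi_simple D"
    and U: "zariski_open U" "{0} \<in> U"
    and a: "a \<in> sections U" and b: "b \<in> sections U" "b \<noteq> 0"
    and const: "\<forall>\<delta>. sec_der D \<delta> a * b - a * sec_der D \<delta> b = 0"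
  shows "\<exists>c\<in>sections U. (\<forall>\<delta>. sec_der D \<delta> c = 0) \<and> a = c * b"
proof -
  note sec = sections_eq_const_section
  have "\<forall>\<delta>. frac_der (D \<delta>) (a {0}) * b {0} - a {0} * frac_der (D \<delta>) (b {0}) = 0"
    using const by (auto simp: sec_der_def fun_eq_iff)
  moreover have "b {0} \<noteq> 0"
    using sec[OF b(1)] const_section_eq_0_iff[OF U(2)] b(2) by metis
  ultimately obtain c where c: "\<forall>\<delta>. D \<delta> c = 0" "a {0} = Fract c 1 * b {0}"
    using quasi_simple_fract_constant der qs by blast
  have "\<forall>\<delta>. sec_der D \<delta> (const_section U (Fract c 1)) = 0"
    using c(1) der by (simp add: sec_der_const_section frac_der_Fract_constant)
  moreover have "a = const_section U (Fract c 1) * b"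
    using sec[OF a] sec[OF b(1)] c(2) const_section_mult by metis
  ultimately show ?thesis
    using const_section_Fract_in_sections[OF U(1)] by blast
qed

theorem lemma3p9:
  fixes D :: "'d \<Rightarrow> 'a::idom \<Rightarrow> 'a" and U :: "'a set set"
  assumes "\<forall>\<delta>. is_derivation (D \<delta>)"
    and "quasi_simple D"
    and "zariski_open U"
    and "U \<noteq> {}"
  shows "quasi_simple_sub (sections U) (sec_one U) (sec_der D)"
proof -
  have generic: "{0} \<in> U"
    using zero_ideal_in_open assms(3,4) by blast
  have one: "sec_one U = const_section U 1"
    by (simp add: sec_one_def const_section_def)
  have "sec_one U \<in> sections U" "sec_one U \<noteq> 0"
    using const_section_Fract_in_sections[OF assms(3), of 1]
    by (simp_all add: one const_section_eq_0_iff[OF generic] fract_collapse)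
  moreover have "sec_one U * x = x" if "x \<in> sections U" for x
    using const_section_mult[of U 1 "x {0}"] sections_eq_const_section[OF that] by (simp add: one)
  ultimately show ?thesis
    unfolding quasi_simple_sub_def
    using sections_no_zero_divisors[OF generic] sections_quotient_constant[OF assms(1-3) generic]
    by simp
qed

end
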